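(* In the setting described in the context, there exists $N_0$ such that for every $(p,q)\in\mathbb{Z}^2$ with $|(p,q)|>N_0$ the lifted short arc $\widetilde s_{p,q}$ is defined and contained in $R$ (i.e.\ $s_{p,q}$ is $R$-close to $A$), and hence the short arc $s_{p,q}=\pi(\widetilde s_{p,q})$ is embedded in $M$. In particular, all but finitely many geodesics $\gamma_{p,q}$ have embedded short arcs.
   Context: Let $M=\mathbb{H}^3/\Gamma$ be a cusped orientable hyperbolic 3-manifold, $\Gamma\subset \mathrm{PSL}_2(\mathbb{C})$ discrete and torsion-free, with covering map $\pi:\mathbb{H}^3\to M$. Use the upper half-space model, points written $(z,h)$, $z\in\mathbb{C}$, $h>0$. Fix a cusp of $M$ and let $U$ be its maximal embedded horoball neighbourhood; its boundary $T$ is a torus with finitely many self-tangency points. Fix one such point $A$ (a "bumping point"). Normalise (by conjugating $\Gamma$) so that $\pi^{-1}(T)$ contains the horosphere $H_\infty=\{h=1\}$ and the horosphere $H_0$ centred at $0$ of Euclidean diameter $1$, which touch at $A_{0,0}=(0,1)\in\pi^{-1}(A)$. The stabiliser of $\infty$ in $\Gamma$ is generated by $a=\begin{pmatrix}1&t_\alpha\\0&1\end{pmatrix}$, $b=\begin{pmatrix}1&t_\beta\\0&1\end{pmatrix}$ with $t_\alpha,t_\beta$ $\mathbb{R}$-linearly independent. Let $b_{0,0}=x_0t_\alpha+y_0t_\beta$ with $x_0,y_0\in[0,1)$ not both $0$ be such that there is $g\in\Gamma$ with $g(H_0)=H_\infty$, $g(0)=\infty$, $g(A_{0,0})=(b_{0,0},1)$;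 then $g=\begin{pmatrix}cb_{0,0}&-1/c\\c&0\end{pmatrix}$ for some $c\in\mathbb{C}$. For $(p,q)\in\mathbb{Z}^2$ put $b_{p,q}=b_{0,0}+pt_\alpha+qt_\beta$, $g_{p,q}=a^pb^qg$, let $\widetilde\gamma_{p,q}$ be the axis of $g_{p,q}$ in $\mathbb{H}^3$ and $\gamma_{p,q}=\pi(\widetilde\gamma_{p,q})$ the corresponding closed geodesic of $M$. For $|(p,q)|$ large, $\widetilde\gamma_{p,q}$ (a Euclidean semicircle from $z_-$ to $z_+$, where $z_\pm$ are the fixed points of $g_{p,q}$ with $z_-\to0$) meets $H_\infty$ in exactly two points, $C_{p,q}=(c_{p,q},1)$ nearer $z_-$ and $D_{p,q}=(d_{p,q},1)$ nearer $z_+$. The lifted short arc is the geodesic segment $\widetilde s_{p,q}=[g_{p,q}^{-1}(D_{p,q}),C_{p,q}]\subset\widetilde\gamma_{p,q}$, and the short arc is $s_{p,q}=\pi(\widetilde s_{p,q})$. Let $R\subset\mathbb{H}^3$ be the set of points strictly closer to $A_{0,0}$ than to any other point of $\pi^{-1}(A)$; $s_{p,q}$ is called $R$-close to $A$ if $\widetilde s_{p,q}\subset R$. *)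

theory Defs
  imports "HOL-Analysis.Analysis"
begin

text \<open>Elements of SL(2,C) are represented as 2x2 complex matrices; a subgroup of
PSL(2,C) is represented by its full preimage in SL(2,C) (so it contains -I).\<close>

type_synonym cmat = "complex^2^2"

text \<open>Points of the upper half-space model: (z,h) with z complex, h > 0.\<close>
type_synonym hpt = "complex \<times> real"

definition mat2 :: "complex \<Rightarrow> complex \<Rightarrow> complex \<Rightarrow> complex \<Rightarrow> cmat" where
  "mat2 a b c d = (\<chi> i j. if i = 1 then (if j = 1 then a else b) else (if j = 1 then c else d))"

primrec mpow :: "cmat \<Rightarrow> nat \<Rightarrow> cmat" where
  "mpow g 0 = mat 1"
| "mpow g (Suc n) = g ** mpow g n"

definition H3 :: "hpt set" where
  "H3 = {x. snd x > 0}"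

text \<open>Poincare extension of the Moebius transformation of g to the upper half-space.\<close>
definition mob :: "cmat \<Rightarrow> hpt \<Rightarrow> hpt" where
  "mob g x = (let z = fst x; h = snd x;
      a = g$1$1; b = g$1$2; c = g$2$1; d = g$2$2;
      D = (cmod (c * z + d))\<^sup>2 + (cmod c)\<^sup>2 * h\<^sup>2
    in (((a * z + b) * cnj (c * z + d) + a * cnj c * complex_of_real (h\<^sup>2)) / complex_of_real D,
        h / D))"

definition hdist :: "hpt \<Rightarrow> hpt \<Rightarrow> real" where
  "hdist x y = arcosh (1 + ((cmod (fst x - fst y))\<^sup>2 + (snd x - snd y)\<^sup>2) / (2 * snd x * snd y))"

definition hseg :: "hpt \<Rightarrow> hpt \<Rightarrow> hpt set" where
  "hseg P Q = {X \<in> H3. hdist P X + hdist X Q = hdist P Q}"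

text \<open>Complete geodesic with distinct ideal endpoints u, v in C: the Euclidean
semicircle over the segment [u,v] orthogonal to C.\<close>
definition hline :: "complex \<Rightarrow> complex \<Rightarrow> hpt set" where
  "hline u v = {x. snd x > 0 \<and> fst x \<in> open_segment u v \<and>
       (cmod (fst x - (u + v) / 2))\<^sup>2 + (snd x)\<^sup>2 = (cmod (u - v))\<^sup>2 / 4}"

text \<open>Finite fixed points of the boundary action z \<mapsto> (az+b)/(cz+d), c \<noteq> 0.\<close>
definition bfix :: "cmat \<Rightarrow> complex \<Rightarrow> bool" where
  "bfix g z \<longleftrightarrow> g$2$1 * z\<^sup>2 + (g$2$2 - g$1$1) * z - g$1$2 = 0"

text \<open>Repelling (derivative of modulus > 1) and attracting fixed points.\<close>
definition rep_fix :: "cmat \<Rightarrow> complex \<Rightarrow> bool" where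
  "rep_fix g z \<longleftrightarrow> bfix g z \<and> cmod (g$2$1 * z + g$2$2) < 1"

definition att_fix :: "cmat \<Rightarrow> complex \<Rightarrow> bool" where
  "att_fix g z \<longleftrightarrow> bfix g z \<and> cmod (g$2$1 * z + g$2$2) > 1"

definition psl2_group :: "cmat set \<Rightarrow> bool" where
  "psl2_group G \<longleftrightarrow> (\<forall>g\<in>G. det g = 1) \<and> mat 1 \<in> G \<and> - mat 1 \<in> G \<and>
     (\<forall>g\<in>G. \<forall>k\<in>G. g ** k \<in> G) \<and> (\<forall>g\<in>G. matrix_inv g \<in> G)"

definition torsion_free :: "cmat set \<Rightarrow> bool" where
  "torsion_free G \<longleftrightarrow> (\<forall>g\<in>G. \<forall>n::nat. n \<ge> 1 \<longrightarrow> mpow g n \<in> {mat 1, - mat 1} \<longrightarrow> g \<in> {mat 1, - mat 1})"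

text \<open>Finite covolume: some Borel set of finite hyperbolic volume
(volume element |dz|^2 dh / h^3) has Gamma-translates covering H3.\<close>
definition finite_covolume :: "cmat set \<Rightarrow> bool" where
  "finite_covolume G \<longleftrightarrow> (\<exists>F. F \<in> sets lborel \<and> F \<subseteq> H3 \<and> (\<Union>g\<in>G. mob g ` F) = H3 \<and>
      (\<integral>\<^sup>+ x. indicator F x * ennreal (1 / (snd x)^3) \<partial>lborel) < \<infinity>)"

definition transl :: "complex \<Rightarrow> cmat" where
  "transl t = mat2 1 t 0 1"

definition Binf :: "hpt set" where "Binf = {x. snd x > 1}"
definition Hinf :: "hpt set" where "Hinf = {x. snd x = 1}"

definition H0 :: "hpt set" where
  "H0 = {x. snd x > 0 \<and> (cmod (fst x))\<^sup>2 + (snd x - 1/2)\<^sup>2 = 1/4}"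

definition Rregion :: "cmat set \<Rightarrow> hpt \<Rightarrow> hpt set" where
  "Rregion G P = {X \<in> H3. \<forall>g\<in>G. mob g P \<noteq> P \<longrightarrow> hdist X P < hdist X (mob g P)}"

text \<open>pi restricted to S is injective (S embeds in M = H3 / G).\<close>
definition embeds_mod :: "cmat set \<Rightarrow> hpt set \<Rightarrow> bool" where
  "embeds_mod G S \<longleftrightarrow> (\<forall>x\<in>S. \<forall>y\<in>S. (\<exists>g\<in>G. mob g x = y) \<longrightarrow> x = y)"

end

theory Submission
  imports Defs
begin

(* Normalise A = (0,1).  The element g_{p,q} = a^p b^q g equals mat2 (c b) (-1/c) c 0 with
   |c| = 1 and b = b_{p,q}, so |b| grows linearly in |(p,q)| (lattice estimate).  For |b| large
   its fixed points are z_- ~ 1/b and z_+ ~ b, the axis is a huge semicircle, and it crosses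
   the horosphere {h = 1} at C near A and at D, which g_{p,q}^{-1} carries near A as well.
   Since nearness to A is preserved along hyperbolic geodesic segments, the whole lifted
   short arc lies in a small box around A.

   On the other hand the orbit of A is uniformly separated from A: using that the horoball
   {h > 1} is precisely invariant (a Shimizu-type bound on matrix entries), that the cusp
   lattice has a shortest vector and that Gamma is torsion-free, every nontrivial element
   moves A either to height <= 1/2 or horizontally away by a fixed e > 0.  Comparing
   cosh-distances, points near A are then closer to A than to any other orbit point (so they
   lie in R) and no two of them are Gamma-equivalent (so the arc embeds). *)

section \<open>Unimodular 2x2 matrices\<close>

lemma mat2_nth [simp]: "mat2 a b c d $ 1 $ 1 = a" "mat2 a b c d $ 1 $ 2 = b"
  "mat2 a b c d $ 2 $ 1 = c" "mat2 a b c d $ 2 $ 2 = d"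
  by (simp_all add: mat2_def)

lemma mat2_eta: "(M::cmat) = mat2 (M$1$1) (M$1$2) (M$2$1) (M$2$2)"
  by (simp add: vec_eq_iff forall_2 mat2_def)

lemma mat2_eq: "mat2 a b c d = mat2 a' b' c' d' \<longleftrightarrow> a = a' \<and> b = b' \<and> c = c' \<and> d = d'"
  by (metis mat2_nth)

lemma mat2_mult:
  "mat2 a b c d ** mat2 a' b' c' d' = mat2 (a*a'+b*c') (a*b'+b*d') (c*a'+d*c') (c*b'+d*d')"
  by (simp add: vec_eq_iff forall_2 mat2_def matrix_matrix_mult_def sum_2)

lemma mat2_one: "mat 1 = mat2 1 0 0 1"
  by (simp add: vec_eq_iff forall_2 mat2_def mat_def)

lemma mat2_neg: "- mat2 a b c d = mat2 (-a) (-b) (-c) (-d)"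
  by (simp add: vec_eq_iff forall_2 mat2_def)

lemma det_mat2: "det (mat2 a b c d) = a*d - b*c"
  by (simp add: det_2)

lemma transl_mult: "transl t ** mat2 a b c d = mat2 (a + t*c) (b + t*d) c d"
  by (simp add: transl_def mat2_mult)

lemma matrix_inv_eq:
  fixes A B :: cmat
  assumes "A ** B = mat 1" "B ** A = mat 1"
  shows "matrix_inv A = B"
proof -
  have "\<exists>A'. A ** A' = mat 1 \<and> A' ** A = mat 1" using assms by blast
  then obtain A' where A': "A ** A' = mat 1" "A' ** A = mat 1" "matrix_inv A = A'"
    unfolding matrix_inv_def by (metis (mono_tags, lifting) someI_ex)
  have "A' = A' ** (A ** B)" using assms by simp
  also have "\<dots> = B" by (simp add: matrix_mul_assoc A')
  finally show ?thesis using A' by simp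
qed

lemma matrix_inv_mat2:
  assumes "a*d - b*c = 1"
  shows "matrix_inv (mat2 a b c d) = mat2 d (-b) (-c) a"
  by (rule matrix_inv_eq) (use assms in \<open>simp_all add: mat2_mult mat2_one algebra_simps\<close>)

section \<open>The action on upper half-space and the hyperbolic distance\<close>

lemma mob_snd:
  "snd (mob g x) = snd x / ((cmod (g$2$1 * fst x + g$2$2))\<^sup>2 + (cmod (g$2$1))\<^sup>2 * (snd x)\<^sup>2)"
  by (simp add: mob_def Let_def)

lemma mob_pm_one: "mob (mat 1) x = x" "mob (- mat 1) x = x"
  by (auto simp: mob_def mat2_one mat2_neg Let_def)

lemma mob_pos:
  assumes "det \<gamma> = 1" and "snd x > 0"
  shows "snd (mob \<gamma> x) > 0"
proof -
  obtain a b c d where \<gamma>: "\<gamma> = mat2 a b c d" using mat2_eta by blast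
  have "a*d - b*c = 1" using assms(1) by (simp add: \<gamma> det_mat2)
  hence "c = 0 \<Longrightarrow> d \<noteq> 0" by auto
  hence "(cmod (c * fst x + d))\<^sup>2 + (cmod c)\<^sup>2 * (snd x)\<^sup>2 > 0"
    using assms(2) by (cases "c = 0") (simp_all add: add_nonneg_pos)
  thus ?thesis using assms(2) by (simp add: mob_snd \<gamma>)
qed

lemma mob_at_A:
  "mob (mat2 a b c d) (0, 1) =
     ((b * cnj d + a * cnj c) / complex_of_real ((cmod d)\<^sup>2 + (cmod c)\<^sup>2), 1 / ((cmod d)\<^sup>2 + (cmod c)\<^sup>2))"
  by (simp add: mob_def Let_def)

text \<open>For \<open>c \<noteq> 0\<close> the Poincare extension is inversion in an isometric sphere followed
  by a horizontal motion; these are its coordinates.\<close>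
lemma mob_lower_nonzero:
  fixes a b c d z :: complex and h :: real
  assumes det: "a*d - b*c = 1" and c: "c \<noteq> 0" and h: "h > 0"
  defines "U \<equiv> c * z + d"
  defines "Dx \<equiv> (cmod U)\<^sup>2 + (cmod c)\<^sup>2 * h\<^sup>2"
  shows "Dx > 0" "snd (mob (mat2 a b c d) (z,h)) = h / Dx"
    "fst (mob (mat2 a b c d) (z,h)) = a/c - cnj U / (c * of_real Dx)"
proof -
  show Dp: "Dx > 0" unfolding Dx_def using c h by (simp add: add_nonneg_pos)
  show "snd (mob (mat2 a b c d) (z,h)) = h / Dx"
    by (simp add: mob_def Let_def U_def Dx_def)
  have f: "fst (mob (mat2 a b c d) (z,h)) =
      ((a * z + b) * cnj U + a * cnj c * complex_of_real (h\<^sup>2)) / of_real Dx"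
    by (simp add: mob_def Let_def U_def Dx_def)
  have D: "of_real Dx = U * cnj U + c * cnj c * of_real (h\<^sup>2)"
    by (simp add: Dx_def complex_norm_square[symmetric])
  have e: "c * (a * z + b) = a * U - 1" using det by (simp add: U_def algebra_simps)
  have "c * ((a * z + b) * cnj U + a * cnj c * complex_of_real (h\<^sup>2))
      = (c * (a * z + b)) * cnj U + a * (c * cnj c * complex_of_real (h\<^sup>2))"
    by (simp add: algebra_simps)
  also have "\<dots> = a * of_real Dx - cnj U" unfolding e D by (simp add: algebra_simps)
  finally have "(a * z + b) * cnj U + a * cnj c * complex_of_real (h\<^sup>2) = (a * of_real Dx - cnj U) / c"
    using c by (simp add: eq_divide_eq mult.commute)
  moreover have "(a * of_real Dx - cnj U) / c / of_real Dx = a / c - cnj U / (c * of_real Dx)"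
    using Dp by (simp add: diff_divide_distrib)
  ultimately show "fst (mob (mat2 a b c d) (z,h)) = a/c - cnj U / (c * of_real Dx)"
    unfolding f by simp
qed

text \<open>The quantity \<open>cosh (hdist x y) - 1\<close>; comparing distances amounts to comparing it.\<close>
definition hquot :: "hpt \<Rightarrow> hpt \<Rightarrow> real" where
  "hquot x y = ((cmod (fst x - fst y))\<^sup>2 + (snd x - snd y)\<^sup>2) / (2 * snd x * snd y)"

lemma hdist_hquot: "hdist x y = arcosh (1 + hquot x y)"
  by (simp add: hdist_def hquot_def)

lemma hquot_nonneg: "snd x > 0 \<Longrightarrow> snd y > 0 \<Longrightarrow> hquot x y \<ge> 0"
  by (simp add: hquot_def)

lemma hdist_less_iff:
  "snd x > 0 \<Longrightarrow> snd y > 0 \<Longrightarrow> snd u > 0 \<Longrightarrow> snd v > 0 \<Longrightarrow>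
   hdist x y < hdist u v \<longleftrightarrow> hquot x y < hquot u v"
  unfolding hdist_hquot using hquot_nonneg[of x y] hquot_nonneg[of u v] by simp

lemma hdist_nonneg: "snd x > 0 \<Longrightarrow> snd y > 0 \<Longrightarrow> hdist x y \<ge> 0"
  unfolding hdist_hquot using hquot_nonneg[of x y] by simp

text \<open>The algebraic identity behind invariance of \<open>hquot\<close> under an inversion:
  it relates the Euclidean data of two image points to those of the originals.\<close>
lemma inversion_distance_identity:
  fixes U V :: complex and C hx hy Dx Dy :: real
  assumes Dx: "Dx = (cmod U)\<^sup>2 + C * hx\<^sup>2" and Dy: "Dy = (cmod V)\<^sup>2 + C * hy\<^sup>2"
    and p: "Dx > 0" "Dy > 0"
  shows "(cmod (V / of_real Dy - U / of_real Dx))\<^sup>2 + C * (hx/Dx - hy/Dy)\<^sup>2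
       = ((cmod (U - V))\<^sup>2 + C * (hx - hy)\<^sup>2) / (Dx * Dy)"
proof -
  define w where "w = Re U * Re V + Im U * Im V"
  have e1: "V / of_real Dy - U / of_real Dx = of_real (1/(Dx*Dy)) * (of_real Dx * V - of_real Dy * U)"
    using p by (simp add: field_simps)
  have "(cmod (V / of_real Dy - U / of_real Dx))\<^sup>2 = (cmod (of_real Dx * V - of_real Dy * U))\<^sup>2 / (Dx*Dy)\<^sup>2"
    unfolding e1 using p
    by (simp only: norm_mult norm_of_real power_mult_distrib) (simp add: power_divide abs_mult power_mult_distrib)
  also have "(cmod (of_real Dx * V - of_real Dy * U))\<^sup>2 = Dx\<^sup>2 * (cmod V)\<^sup>2 + Dy\<^sup>2 * (cmod U)\<^sup>2 - 2 * Dx * Dy * w"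
    by (simp add: cmod_power2 w_def) (simp add: power2_eq_square algebra_simps)
  finally have n: "(cmod (V / of_real Dy - U / of_real Dx))\<^sup>2
      = (Dx\<^sup>2 * (cmod V)\<^sup>2 + Dy\<^sup>2 * (cmod U)\<^sup>2 - 2 * Dx * Dy * w) / (Dx*Dy)\<^sup>2" .
  have uv: "(cmod (U - V))\<^sup>2 = (cmod U)\<^sup>2 + (cmod V)\<^sup>2 - 2 * w"
    by (simp add: cmod_power2 w_def) (simp add: power2_eq_square algebra_simps)
  have h: "C * (hx/Dx - hy/Dy)\<^sup>2 = C * (hx * Dy - hy * Dx)\<^sup>2 / (Dx*Dy)\<^sup>2"
    using p by (simp add: field_simps)
  have poly: "Dx\<^sup>2 * (cmod V)\<^sup>2 + Dy\<^sup>2 * (cmod U)\<^sup>2 - 2 * Dx * Dy * w + C * (hx * Dy - hy * Dx)\<^sup>2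
      = (Dx * Dy) * ((cmod U)\<^sup>2 + (cmod V)\<^sup>2 - 2 * w + C * (hx - hy)\<^sup>2)"
    unfolding Dx Dy by (simp add: power2_eq_square algebra_simps)
  have "(cmod (V / of_real Dy - U / of_real Dx))\<^sup>2 + C * (hx/Dx - hy/Dy)\<^sup>2
      = (Dx * Dy) * ((cmod U)\<^sup>2 + (cmod V)\<^sup>2 - 2 * w + C * (hx - hy)\<^sup>2) / (Dx*Dy)\<^sup>2"
    unfolding n h poly[symmetric] by (simp add: add_divide_distrib)
  also have "\<dots> = ((cmod (U - V))\<^sup>2 + C * (hx - hy)\<^sup>2) / (Dx * Dy)"
    using p unfolding uv by (simp add: power2_eq_square)
  finally show ?thesis .
qed

lemma hquot_mob_lower_nonzero:
  fixes a b c d zx zy :: complex and h k :: real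
  assumes det: "a*d - b*c = 1" and c: "c \<noteq> 0" and h: "h > 0" and k: "k > 0"
  shows "hquot (mob (mat2 a b c d) (zx,h)) (mob (mat2 a b c d) (zy,k)) = hquot (zx,h) (zy,k)"
proof -
  define U V where "U = c * zx + d" and "V = c * zy + d"
  define Dx Dy where "Dx = (cmod U)\<^sup>2 + (cmod c)\<^sup>2 * h\<^sup>2" and "Dy = (cmod V)\<^sup>2 + (cmod c)\<^sup>2 * k\<^sup>2"
  define E where "E = (cmod (zx - zy))\<^sup>2 + (h - k)\<^sup>2"
  define x' y' where "x' = mob (mat2 a b c d) (zx,h)" and "y' = mob (mat2 a b c d) (zy,k)"
  note mx = mob_lower_nonzero[OF det c h, of zx, folded U_def, folded Dx_def x'_def]
  note my = mob_lower_nonzero[OF det c k, of zy, folded V_def, folded Dy_def y'_def]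
  have cp: "(cmod c)\<^sup>2 > 0" using c by simp
  have "fst x' - fst y' = (cnj V / of_real Dy - cnj U / of_real Dx) / c"
    using mx(3) my(3) by (simp add: diff_divide_distrib divide_divide_eq_left mult.commute)
  also have "cnj V / of_real Dy - cnj U / of_real Dx = cnj (V / of_real Dy - U / of_real Dx)"
    by simp
  finally have n1: "(cmod (fst x' - fst y'))\<^sup>2 = (cmod (V / of_real Dy - U / of_real Dx))\<^sup>2 / (cmod c)\<^sup>2"
    by (simp only: norm_divide complex_mod_cnj power_divide)
  have UV: "cmod (U - V) = cmod c * cmod (zx - zy)"
    by (simp add: U_def V_def norm_mult[symmetric] algebra_simps)
  have "(cmod c)\<^sup>2 * ((cmod (fst x' - fst y'))\<^sup>2 + (snd x' - snd y')\<^sup>2)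
      = (cmod (V / of_real Dy - U / of_real Dx))\<^sup>2 + (cmod c)\<^sup>2 * (h/Dx - k/Dy)\<^sup>2"
    unfolding n1 mx(2) my(2) using cp by (simp add: distrib_left)
  also have "\<dots> = ((cmod c)\<^sup>2 * E) / (Dx * Dy)"
    using inversion_distance_identity[OF Dx_def Dy_def mx(1) my(1)]
    unfolding UV E_def by (simp add: power_mult_distrib distrib_left)
  finally have "(cmod c)\<^sup>2 * ((cmod (fst x' - fst y'))\<^sup>2 + (snd x' - snd y')\<^sup>2)
      = (cmod c)\<^sup>2 * (E / (Dx * Dy))" by simp
  hence "(cmod (fst x' - fst y'))\<^sup>2 + (snd x' - snd y')\<^sup>2 = E / (Dx * Dy)"
    using cp by (simp only: mult_cancel_left) simp
  hence "hquot x' y' = (E / (Dx * Dy)) / (2 * (h / Dx) * (k / Dy))"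
    unfolding hquot_def mx(2) my(2) by simp
  also have "\<dots> = hquot (zx,h) (zy,k)" using mx(1) my(1) h k by (simp add: hquot_def E_def field_simps)
  finally show ?thesis unfolding x'_def y'_def .
qed

lemma hquot_mob_upper_triangular:
  fixes a b d zx zy :: complex and h k :: real
  assumes det: "a*d = 1" and h: "h > 0" and k: "k > 0"
  shows "hquot (mob (mat2 a b 0 d) (zx,h)) (mob (mat2 a b 0 d) (zy,k)) = hquot (zx,h) (zy,k)"
proof -
  define n where "n = (cmod d)\<^sup>2"
  have d0: "d \<noteq> 0" using det by auto
  have np: "n > 0" using d0 by (simp add: n_def)
  have "fst (mob (mat2 a b 0 d) (zx,h)) - fst (mob (mat2 a b 0 d) (zy,k)) = a * (zx - zy) * cnj d / of_real n"
    by (simp add: mob_def n_def Let_def diff_divide_distrib[symmetric] algebra_simps)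
  moreover have "cmod a * cmod d = 1" using det by (metis norm_mult norm_one)
  ultimately have "cmod (fst (mob (mat2 a b 0 d) (zx,h)) - fst (mob (mat2 a b 0 d) (zy,k))) = cmod (zx - zy) / n"
    using np by (simp add: norm_mult norm_divide mult.assoc[symmetric])
  moreover have "snd (mob (mat2 a b 0 d) (zx,h)) = h / n" "snd (mob (mat2 a b 0 d) (zy,k)) = k / n"
    by (simp_all add: mob_snd n_def)
  ultimately have "hquot (mob (mat2 a b 0 d) (zx,h)) (mob (mat2 a b 0 d) (zy,k))
      = (((cmod (zx - zy))\<^sup>2 + (h - k)\<^sup>2) / n\<^sup>2) / (2 * (h / n) * (k / n))"
    unfolding hquot_def using np by (simp add: power_divide diff_divide_distrib[symmetric] add_divide_distrib)
  also have "\<dots> = hquot (zx,h) (zy,k)" using np h k by (simp add: hquot_def field_simps power2_eq_square)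
  finally show ?thesis .
qed

lemma hquot_mob:
  assumes "det \<gamma> = 1" and "snd x > 0" and "snd y > 0"
  shows "hquot (mob \<gamma> x) (mob \<gamma> y) = hquot x y"
proof -
  obtain a b c d where \<gamma>: "\<gamma> = mat2 a b c d" using mat2_eta by blast
  have det: "a*d - b*c = 1" using assms(1) by (simp add: \<gamma> det_mat2)
  obtain zx h zy k where xy: "x = (zx, h)" "y = (zy, k)" by fastforce
  show ?thesis
  proof (cases "c = 0")
    case True thus ?thesis using det hquot_mob_upper_triangular assms(2,3) by (simp add: \<gamma> xy)
  next
    case False thus ?thesis using det hquot_mob_lower_nonzero assms(2,3) by (simp add: \<gamma> xy)
  qed
qed

section \<open>The orbit of the bumping point stays away from it\<close>

text \<open>If \<open>\<gamma>\<close> maps the cusp horoball \<open>Binf\<close> to itself or off itself, its lower-left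
  entry is \<open>0\<close> or has modulus at least \<open>1\<close>: otherwise \<open>\<gamma>\<close> would map a point of
  \<open>Binf\<close> above the pole \<open>-d/c\<close> to a point of height \<open>1/(|c|^2 h)\<close> that is
  wrongly placed with respect to \<open>Binf\<close> (a Shimizu-type bound).\<close>
lemma lower_left_entry_large:
  assumes hb: "mob \<gamma> ` Binf = Binf \<or> mob \<gamma> ` Binf \<inter> Binf = {}"
  shows "\<gamma>$2$1 = 0 \<or> 1 \<le> cmod (\<gamma>$2$1)"
proof (rule ccontr)
  define c d where "c = \<gamma>$2$1" and "d = \<gamma>$2$2"
  assume "\<not> (\<gamma>$2$1 = 0 \<or> 1 \<le> cmod (\<gamma>$2$1))"
  hence c0: "c \<noteq> 0" and c2: "(cmod c)\<^sup>2 < 1" "(cmod c)\<^sup>2 > 0"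
    by (auto simp: c_def power_less_one_iff)
  have ht: "snd (mob \<gamma> (-d/c, h)) = 1 / ((cmod c)\<^sup>2 * h)" if "h > 0" for h
  proof -
    have "\<gamma>$2$1 * (-d/c) + \<gamma>$2$2 = 0" using c0 by (simp add: c_def d_def)
    thus ?thesis using that by (simp add: mob_snd c_def power2_eq_square)
  qed
  show False
  proof (cases "mob \<gamma> ` Binf = Binf")
    case True
    define h where "h = 1 / (cmod c)\<^sup>2 + 1"
    have h1: "h > 1" using c2 by (simp add: h_def)
    hence "mob \<gamma> (-d/c, h) \<in> Binf" using True by (auto simp: Binf_def)
    hence "1 / ((cmod c)\<^sup>2 * h) > 1" using ht[of h] h1 by (simp add: Binf_def)
    moreover have "(cmod c)\<^sup>2 * h = 1 + (cmod c)\<^sup>2" using c2 by (simp add: h_def field_simps)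
    ultimately show False using c2 by simp
  next
    case False
    hence dis: "mob \<gamma> ` Binf \<inter> Binf = {}" using hb by blast
    define h where "h = (1 / (cmod c)\<^sup>2 + 1) / 2"
    have h1: "h > 1" using c2 by (simp add: h_def field_simps)
    have "(cmod c)\<^sup>2 * h = (1 + (cmod c)\<^sup>2) / 2" using c2 by (simp add: h_def field_simps)
    hence "1 / ((cmod c)\<^sup>2 * h) > 1" using c2 h1 by (simp add: field_simps)
    hence "mob \<gamma> (-d/c, h) \<in> Binf" using ht[of h] h1 by (simp add: Binf_def)
    moreover have "(-d/c, h) \<in> Binf" using h1 by (simp add: Binf_def)
    ultimately show False using dis by blast
  qed
qed

text \<open>Applying the bound to \<open>\<gamma>\<close>, \<open>g \<gamma>\<close> and \<open>\<gamma> g\<^sup>-\<^sup>1\<close>, where \<open>g\<close> is the element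
  carrying the bumping point to height one, controls three entries of \<open>\<gamma>\<close>.\<close>
lemma corner_entries_large:
  assumes grp: "psl2_group \<Gamma>"
    and horoball: "\<forall>\<gamma>\<in>\<Gamma>. mob \<gamma> ` Binf = Binf \<or> mob \<gamma> ` Binf \<inter> Binf = {}"
    and g_in: "mat2 (c * b0) (- 1 / c) c 0 \<in> \<Gamma>" and c1: "cmod c = 1"
    and \<gamma>: "mat2 \<alpha> \<beta> \<kappa> \<delta> \<in> \<Gamma>"
  shows "(\<alpha> = 0 \<or> 1 \<le> cmod \<alpha>) \<and> (\<kappa> = 0 \<or> 1 \<le> cmod \<kappa>) \<and> (\<delta> = 0 \<or> 1 \<le> cmod \<delta>)"
proof -
  have c0: "c \<noteq> 0" using c1 by auto
  have large: "\<eta>$2$1 = 0 \<or> 1 \<le> cmod (\<eta>$2$1)" if "\<eta> \<in> \<Gamma>" for \<eta>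
    using lower_left_entry_large horoball that by blast
  have mul: "x ** y \<in> \<Gamma>" if "x \<in> \<Gamma>" "y \<in> \<Gamma>" for x y
    using grp that by (simp add: psl2_group_def)
  have "matrix_inv (mat2 (c * b0) (- 1 / c) c 0) = mat2 0 (1 / c) (- c) (c * b0)"
    using matrix_inv_mat2[of "c * b0" 0 "- 1 / c" c] c0 by simp
  hence g_inv: "mat2 0 (1 / c) (- c) (c * b0) \<in> \<Gamma>" using grp g_in by (metis psl2_group_def)
  have "\<kappa> = 0 \<or> 1 \<le> cmod \<kappa>" using large[OF \<gamma>] by simp
  moreover have "\<alpha> = 0 \<or> 1 \<le> cmod \<alpha>"
    using large[OF mul[OF g_in \<gamma>]] by (simp add: mat2_mult norm_mult c1 c0)
  moreover have "\<delta> = 0 \<or> 1 \<le> cmod \<delta>"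
    using large[OF mul[OF \<gamma> g_inv]] by (simp add: mat2_mult norm_mult c1 c0)
  ultimately show ?thesis by blast
qed

text \<open>A torsion-free group contains no element of the form \<open>z \<mapsto> -1/(\<kappa>^2 z)\<close>
  (it would have order two in PSL(2,C)).\<close>
lemma no_order_two_inversion:
  assumes tf: "torsion_free \<Gamma>" and \<gamma>: "mat2 0 \<beta> \<kappa> 0 \<in> \<Gamma>" and det: "\<beta> * \<kappa> = - 1"
  shows False
proof -
  have "\<kappa> * \<beta> = - 1" using det by (simp add: mult.commute)
  hence "mpow (mat2 0 \<beta> \<kappa> 0) 2 = - mat 1"
    using det by (simp add: numeral_2_eq_2 mat2_one mat2_neg mat2_mult)
  hence "mat2 0 \<beta> \<kappa> 0 \<in> {mat 1, - mat 1}"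
    using tf \<gamma> unfolding torsion_free_def by (metis insertCI one_le_numeral)
  thus False using det by (auto simp: mat2_one mat2_neg mat2_eq)
qed

definition far_from_A :: "real \<Rightarrow> hpt \<Rightarrow> bool" where
  "far_from_A e P \<longleftrightarrow> 0 < snd P \<and> snd P \<le> 1 \<and> (snd P \<le> 1/2 \<or> e \<le> cmod (fst P))"

lemma orbit_point_far:
  fixes \<alpha> \<beta> \<kappa> \<delta> :: complex
  assumes det: "\<alpha> * \<delta> - \<beta> * \<kappa> = 1" and e: "e \<le> 1/2"
    and a: "\<alpha> = 0 \<or> 1 \<le> cmod \<alpha>" and k: "1 \<le> cmod \<kappa>" and d: "\<delta> = 0 \<or> 1 \<le> cmod \<delta>"
    and not_inv: "\<not> (\<alpha> = 0 \<and> \<delta> = 0)"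
  shows "far_from_A e (mob (mat2 \<alpha> \<beta> \<kappa> \<delta>) (0, 1))"
proof -
  define N where "N = (cmod \<delta>)\<^sup>2 + (cmod \<kappa>)\<^sup>2"
  define P where "P = mob (mat2 \<alpha> \<beta> \<kappa> \<delta>) (0, 1)"
  have P: "P = ((\<beta> * cnj \<delta> + \<alpha> * cnj \<kappa>) / complex_of_real N, 1 / N)"
    by (simp add: P_def mob_at_A N_def)
  have "(cmod \<kappa>)\<^sup>2 \<ge> 1" using k by (simp add: one_le_power)
  hence N1: "N \<ge> 1" unfolding N_def using zero_le_power2[of "cmod \<delta>"] by linarith
  hence height: "0 < snd P" "snd P \<le> 1" by (simp_all add: P)
  have "snd P \<le> 1/2 \<or> e \<le> cmod (fst P)"
  proof (cases "N \<ge> 2")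
    case True thus ?thesis by (simp add: P field_simps)
  next
    case N2: False
    have d0: "\<delta> = 0"
    proof (rule ccontr)
      assume "\<delta> \<noteq> 0"
      hence "(cmod \<delta>)\<^sup>2 \<ge> 1" using d by (simp add: one_le_power)
      thus False using N2 \<open>(cmod \<kappa>)\<^sup>2 \<ge> 1\<close> by (simp add: N_def)
    qed
    hence a1: "1 \<le> cmod \<alpha>" using a not_inv by simp
    have "fst P = \<alpha> * cnj \<kappa> / complex_of_real ((cmod \<kappa>)\<^sup>2)" using d0 by (simp add: P N_def)
    also have "\<dots> = \<alpha> / \<kappa>" by (metis complex_div_cnj of_real_power)
    finally have fP: "cmod (fst P) = cmod \<alpha> / cmod \<kappa>" by (simp add: norm_divide)
    have "(cmod \<kappa>)\<^sup>2 < 2\<^sup>2" using N2 d0 by (simp add: N_def)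
    hence "cmod \<kappa> < 2" using power_less_imp_less_base by fastforce
    moreover have "\<kappa> \<noteq> 0" using k by auto
    ultimately have "1/2 \<le> cmod \<alpha> / cmod \<kappa>" using a1 by (simp add: le_divide_eq)
    thus ?thesis using fP e by linarith
  qed
  thus ?thesis using height by (simp add: far_from_A_def P_def)
qed

lemma mob_transl_A: "mob (transl t) (0, 1) = (t, 1)" "mob (- transl t) (0, 1) = (t, 1)"
  by (simp_all add: transl_def mat2_neg mob_at_A)

lemma orbit_separation:
  assumes grp: "psl2_group \<Gamma>" and tf: "torsion_free \<Gamma>"
    and stab: "\<forall>\<gamma>\<in>\<Gamma>. \<gamma>$2$1 = 0 \<longleftrightarrow>
                 (\<exists>p q :: int. \<gamma> = transl (of_int p * t\<alpha> + of_int q * t\<beta>)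
                             \<or> \<gamma> = - transl (of_int p * t\<alpha> + of_int q * t\<beta>))"
    and horoball: "\<forall>\<gamma>\<in>\<Gamma>. mob \<gamma> ` Binf = Binf \<or> mob \<gamma> ` Binf \<inter> Binf = {}"
    and g_in: "mat2 (c * b0) (- 1 / c) c 0 \<in> \<Gamma>" and c1: "cmod c = 1"
    and lat: "\<forall>p q :: int. (p, q) \<noteq> (0, 0) \<longrightarrow> e \<le> cmod (of_int p * t\<alpha> + of_int q * t\<beta>)"
    and e: "e \<le> 1/2"
    and \<gamma>_in: "\<gamma> \<in> \<Gamma>"
  shows "\<gamma> = mat 1 \<or> \<gamma> = - mat 1 \<or> far_from_A e (mob \<gamma> (0, 1))"
proof -
  obtain \<alpha> \<beta> \<kappa> \<delta> where \<gamma>: "\<gamma> = mat2 \<alpha> \<beta> \<kappa> \<delta>" using mat2_eta by blast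
  have "det \<gamma> = 1" using grp \<gamma>_in by (simp add: psl2_group_def)
  hence det: "\<alpha> * \<delta> - \<beta> * \<kappa> = 1" by (simp add: \<gamma> det_mat2)
  note entries = corner_entries_large[OF grp horoball g_in c1 \<gamma>_in[unfolded \<gamma>]]
  show ?thesis
  proof (cases "\<kappa> = 0")
    case True
    then obtain p q :: int where pq: "\<gamma> = transl (of_int p * t\<alpha> + of_int q * t\<beta>)
                             \<or> \<gamma> = - transl (of_int p * t\<alpha> + of_int q * t\<beta>)"
      using stab \<gamma>_in unfolding \<gamma> by (metis mat2_nth(3))
    show ?thesis
    proof (cases "(p, q) = (0, 0)")
      case True thus ?thesis using pq by (auto simp: transl_def mat2_one)
    next
      case False
      hence "e \<le> cmod (of_int p * t\<alpha> + of_int q * t\<beta>)" using lat by blast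
      thus ?thesis using pq mob_transl_A by (auto simp: far_from_A_def)
    qed
  next
    case False
    have "\<not> (\<alpha> = 0 \<and> \<delta> = 0)"
    proof
      assume "\<alpha> = 0 \<and> \<delta> = 0"
      hence "mat2 0 \<beta> \<kappa> 0 \<in> \<Gamma>" "\<beta> * \<kappa> = - 1" using \<gamma>_in det by (auto simp: \<gamma>) (metis add.inverse_inverse)
      thus False by (rule no_order_two_inversion[OF tf])
    qed
    thus ?thesis using orbit_point_far[OF det e] entries False by (simp add: \<gamma>)
  qed
qed

section \<open>The cusp lattice\<close>

lemma independent_det_nonzero:
  assumes indep: "\<forall>r s :: real. complex_of_real r * t\<alpha> + complex_of_real s * t\<beta> = 0 \<longrightarrow> r = 0 \<and> s = 0"
  shows "Re t\<alpha> * Im t\<beta> - Im t\<alpha> * Re t\<beta> \<noteq> 0"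
proof
  assume D: "Re t\<alpha> * Im t\<beta> - Im t\<alpha> * Re t\<beta> = 0"
  have "complex_of_real (Im t\<beta>) * t\<alpha> + complex_of_real (- Im t\<alpha>) * t\<beta> = 0"
    using D by (simp add: complex_eq_iff algebra_simps)
  hence "Im t\<beta> = 0 \<and> Im t\<alpha> = 0" using indep by fastforce
  moreover have "complex_of_real (Re t\<beta>) * t\<alpha> + complex_of_real (- Re t\<alpha>) * t\<beta> = 0"
    using D by (simp add: complex_eq_iff algebra_simps)
  hence "Re t\<beta> = 0 \<and> Re t\<alpha> = 0" using indep by fastforce
  ultimately have "complex_of_real 1 * t\<alpha> + complex_of_real 0 * t\<beta> = 0"
    by (simp add: complex_eq_iff)
  thus False using indep by fastforce
qed

lemma sqrt_sum_sq_le: "sqrt (r\<^sup>2 + s\<^sup>2) \<le> \<bar>r\<bar> + \<bar>s\<bar>"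
  by (rule real_le_lsqrt) (auto simp: power2_eq_square abs_mult_self algebra_simps)

text \<open>Norm equivalence for the lattice: \<open>|r t\<alpha> + s t\<beta>| \<ge> K |(r,s)|\<close> for some \<open>K > 0\<close>,
  obtained by solving for \<open>r, s\<close> with Cramer's rule.\<close>
lemma lattice_norm_bound:
  assumes indep: "\<forall>r s :: real. complex_of_real r * t\<alpha> + complex_of_real s * t\<beta> = 0 \<longrightarrow> r = 0 \<and> s = 0"
  shows "\<exists>K>0. \<forall>r s :: real. K * sqrt (r\<^sup>2 + s\<^sup>2) \<le> cmod (complex_of_real r * t\<alpha> + complex_of_real s * t\<beta>)"
proof -
  define a1 a2 b1 b2 where "a1 = Re t\<alpha>" "a2 = Im t\<alpha>" "b1 = Re t\<beta>" "b2 = Im t\<beta>"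
  define \<Delta> where "\<Delta> = a1 * b2 - a2 * b1"
  define M where "M = \<bar>a1\<bar> + \<bar>a2\<bar> + \<bar>b1\<bar> + \<bar>b2\<bar>"
  have D: "\<Delta> \<noteq> 0" using independent_det_nonzero[OF indep] by (simp add: \<Delta>_def a1_a2_b1_b2_def)
  hence Mp: "M > 0" unfolding M_def \<Delta>_def by (smt (verit) abs_ge_zero mult_eq_0_iff abs_eq_0)
  have "\<bar>\<Delta>\<bar> / M * sqrt (r\<^sup>2 + s\<^sup>2) \<le> cmod (complex_of_real r * t\<alpha> + complex_of_real s * t\<beta>)" for r s
  proof -
    define v where "v = complex_of_real r * t\<alpha> + complex_of_real s * t\<beta>"
    define x y where "x = r*a1 + s*b1" and "y = r*a2 + s*b2"
    have xv: "\<bar>x\<bar> \<le> cmod v" and yv: "\<bar>y\<bar> \<le> cmod v"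
      using abs_Re_le_cmod[of v] abs_Im_le_cmod[of v] by (simp_all add: v_def x_def y_def a1_a2_b1_b2_def)
    have "r * \<Delta> = b2 * x - b1 * y" "s * \<Delta> = a1 * y - a2 * x"
      by (simp_all add: x_def y_def \<Delta>_def algebra_simps)
    hence "\<bar>r\<bar> * \<bar>\<Delta>\<bar> \<le> \<bar>b2\<bar> * \<bar>x\<bar> + \<bar>b1\<bar> * \<bar>y\<bar>" "\<bar>s\<bar> * \<bar>\<Delta>\<bar> \<le> \<bar>a1\<bar> * \<bar>y\<bar> + \<bar>a2\<bar> * \<bar>x\<bar>"
      by (metis abs_mult abs_triangle_ineq4)+
    moreover have "\<bar>b2\<bar> * \<bar>x\<bar> + \<bar>b1\<bar> * \<bar>y\<bar> \<le> (\<bar>b2\<bar> + \<bar>b1\<bar>) * cmod v"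
      "\<bar>a1\<bar> * \<bar>y\<bar> + \<bar>a2\<bar> * \<bar>x\<bar> \<le> (\<bar>a1\<bar> + \<bar>a2\<bar>) * cmod v"
      using xv yv by (simp_all add: distrib_right add_mono mult_left_mono)
    ultimately have "(\<bar>r\<bar> + \<bar>s\<bar>) * \<bar>\<Delta>\<bar> \<le> M * cmod v" by (simp add: M_def algebra_simps)
    moreover have "sqrt (r\<^sup>2 + s\<^sup>2) * \<bar>\<Delta>\<bar> \<le> (\<bar>r\<bar> + \<bar>s\<bar>) * \<bar>\<Delta>\<bar>"
      using sqrt_sum_sq_le by (intro mult_right_mono) auto
    ultimately have "sqrt (r\<^sup>2 + s\<^sup>2) * \<bar>\<Delta>\<bar> / M \<le> cmod v"
      using Mp by (simp add: pos_divide_le_eq mult.commute)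
    thus ?thesis by (simp add: v_def mult.commute)
  qed
  thus ?thesis using D Mp by (intro exI[of _ "\<bar>\<Delta>\<bar> / M"]) auto
qed

lemma lattice_minimum:
  assumes indep: "\<forall>r s :: real. complex_of_real r * t\<alpha> + complex_of_real s * t\<beta> = 0 \<longrightarrow> r = 0 \<and> s = 0"
  shows "\<exists>e>0. e \<le> 1/2 \<and> (\<forall>p q :: int. (p, q) \<noteq> (0, 0) \<longrightarrow> e \<le> cmod (of_int p * t\<alpha> + of_int q * t\<beta>))"
proof -
  obtain K where K: "K > 0"
    "\<And>r s. K * sqrt (r\<^sup>2 + s\<^sup>2) \<le> cmod (complex_of_real r * t\<alpha> + complex_of_real s * t\<beta>)"
    using lattice_norm_bound[OF indep] by blast
  have "K \<le> cmod (of_int p * t\<alpha> + of_int q * t\<beta>)" if "(p, q) \<noteq> (0, 0)" for p q :: int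
  proof -
    have "p \<noteq> 0 \<or> q \<noteq> 0" using that by simp
    hence "1 \<le> p\<^sup>2 + q\<^sup>2" by (smt (verit) zero_le_power2 power2_less_eq_zero_iff)
    hence "1 \<le> sqrt (real_of_int (p\<^sup>2 + q\<^sup>2))" by (intro real_sqrt_ge_one) linarith
    hence "K \<le> K * sqrt (real_of_int (p\<^sup>2 + q\<^sup>2))" using K(1) by simp
    moreover have "K * sqrt (real_of_int (p\<^sup>2 + q\<^sup>2)) \<le> cmod (of_int p * t\<alpha> + of_int q * t\<beta>)"
      using K(2)[of "real_of_int p" "real_of_int q"] by simp
    ultimately show ?thesis by linarith
  qed
  hence "\<forall>p q :: int. (p, q) \<noteq> (0, 0) \<longrightarrow> min K (1/2) \<le> cmod (of_int p * t\<alpha> + of_int q * t\<beta>)"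
    by (meson min.coboundedI1)
  moreover have "0 < min K (1/2)" "min K (1/2) \<le> 1/2" using K(1) by simp_all
  ultimately show ?thesis by blast
qed

lemma lattice_translate_large:
  assumes indep: "\<forall>r s :: real. complex_of_real r * t\<alpha> + complex_of_real s * t\<beta> = 0 \<longrightarrow> r = 0 \<and> s = 0"
  shows "\<exists>N0. \<forall>p q :: int. N0 < sqrt (real_of_int (p\<^sup>2 + q\<^sup>2)) \<longrightarrow>
           B \<le> cmod (b0 + (of_int p * t\<alpha> + of_int q * t\<beta>))"
proof -
  obtain K where K: "K > 0"
    "\<And>r s. K * sqrt (r\<^sup>2 + s\<^sup>2) \<le> cmod (complex_of_real r * t\<alpha> + complex_of_real s * t\<beta>)"
    using lattice_norm_bound[OF indep] by blast
  have "B \<le> cmod (b0 + (of_int p * t\<alpha> + of_int q * t\<beta>))"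
    if "(B + cmod b0) / K < sqrt (real_of_int (p\<^sup>2 + q\<^sup>2))" for p q :: int
  proof -
    have "B + cmod b0 < K * sqrt (real_of_int (p\<^sup>2 + q\<^sup>2))"
      using that K(1) by (simp add: pos_divide_less_eq mult.commute)
    also have "\<dots> \<le> cmod (of_int p * t\<alpha> + of_int q * t\<beta>)"
      using K(2)[of "real_of_int p" "real_of_int q"] by simp
    also have "\<dots> \<le> cmod (b0 + (of_int p * t\<alpha> + of_int q * t\<beta>)) + cmod b0"
      using norm_triangle_ineq4[of "b0 + (of_int p * t\<alpha> + of_int q * t\<beta>)" b0] by simp
    finally show ?thesis by simp
  qed
  thus ?thesis by blast
qed

section \<open>Sets near the bumping point are R-close and embedded\<close>

definition near :: "real \<Rightarrow> hpt \<Rightarrow> bool" where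
  "near \<eta> X \<longleftrightarrow> snd X > 0 \<and> cmod (fst X) \<le> \<eta> \<and> \<bar>snd X - 1\<bar> \<le> \<eta>"

lemma hquot_near_pair:
  assumes e: "0 < \<epsilon>" "\<epsilon> \<le> 1/16" and n1: "near \<epsilon> P1" and n2: "near \<epsilon> P2"
  shows "hquot P1 P2 \<le> 5 * \<epsilon>\<^sup>2"
proof -
  obtain z1 h1 z2 h2 where P: "P1 = (z1, h1)" "P2 = (z2, h2)" by fastforce
  have a1: "cmod z1 \<le> \<epsilon>" "\<bar>h1 - 1\<bar> \<le> \<epsilon>" and a2: "cmod z2 \<le> \<epsilon>" "\<bar>h2 - 1\<bar> \<le> \<epsilon>"
    using n1 n2 by (simp_all add: near_def P)
  have "cmod (z1 - z2) \<le> 2 * \<epsilon>" using a1 a2 norm_triangle_ineq4[of z1 z2] by simp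
  hence "(cmod (z1 - z2))\<^sup>2 \<le> (2*\<epsilon>)\<^sup>2" by (intro power_mono) auto
  moreover have "\<bar>h1 - h2\<bar> \<le> 2 * \<epsilon>" using a1 a2 by linarith
  hence "\<bar>h1 - h2\<bar>\<^sup>2 \<le> (2*\<epsilon>)\<^sup>2" by (intro power_mono) auto
  hence "(h1 - h2)\<^sup>2 \<le> (2*\<epsilon>)\<^sup>2" by simp
  ultimately have num: "(cmod (z1 - z2))\<^sup>2 + (h1 - h2)\<^sup>2 \<le> 8 * \<epsilon>\<^sup>2" by (simp add: power_mult_distrib)
  have den: "2 * (15/16) * (15/16) \<le> 2 * h1 * h2" using a1 a2 e by (intro mult_mono) auto
  have "hquot P1 P2 = ((cmod (z1 - z2))\<^sup>2 + (h1 - h2)\<^sup>2) / (2 * h1 * h2)" by (simp add: hquot_def P)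
  also have "\<dots> \<le> (8 * \<epsilon>\<^sup>2) / (2 * (15/16) * (15/16))" using num den by (intro frac_le) auto
  also have "\<dots> \<le> 5 * \<epsilon>\<^sup>2" by simp
  finally show ?thesis .
qed

lemma hseg_hquot_le:
  assumes "X \<in> hseg P1 P2" and "snd P1 > 0" and "snd P2 > 0"
  shows "hquot P1 X \<le> hquot P1 P2"
proof -
  have X: "snd X > 0" "hdist P1 X + hdist X P2 = hdist P1 P2"
    using assms(1) by (simp_all add: hseg_def H3_def)
  hence "hdist P1 X \<le> hdist P1 P2" using hdist_nonneg[OF X(1) assms(3)] by linarith
  thus ?thesis using hdist_less_iff[of P1 P2 P1 X] assms X(1) by linarith
qed

text \<open>A point with small \<open>hquot\<close>-distance from a point near \<open>A\<close> is itself near \<open>A\<close>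
  (the height is first shown bounded, which makes the Euclidean distance small).\<close>
lemma near_of_hquot_small:
  assumes e: "0 < \<epsilon>" "\<epsilon> \<le> 1/16" and n1: "near \<epsilon> P1" and hX: "snd X > 0"
    and Q: "hquot P1 X \<le> 5 * \<epsilon>\<^sup>2"
  shows "near (7 * \<epsilon>) X"
proof -
  obtain z1 h1 zX hX where P: "P1 = (z1, h1)" "X = (zX, hX)" by fastforce
  have a1: "cmod z1 \<le> \<epsilon>" "\<bar>h1 - 1\<bar> \<le> \<epsilon>" "h1 > 0" and hXp: "hX > 0"
    using n1 hX by (simp_all add: near_def P)
  have e2: "\<epsilon>\<^sup>2 \<le> 1/256" using power_mono[OF e(2), of 2] e by (simp add: power_divide)
  define q where "q = 10 * \<epsilon>\<^sup>2 * h1"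
  have qb: "q \<le> 11 * \<epsilon>\<^sup>2" and qp: "q \<ge> 0" using a1 e by (simp_all add: q_def)
  have main: "(cmod (z1 - zX))\<^sup>2 + (h1 - hX)\<^sup>2 \<le> q * hX"
    using Q a1 hXp by (simp add: hquot_def P q_def divide_le_eq algebra_simps)
  have hX2: "hX < 2"
  proof (rule ccontr)
    assume "\<not> hX < 2"
    hence "hX / 4 \<le> hX - h1" using a1 e by linarith
    hence "(hX/4)\<^sup>2 \<le> (h1 - hX)\<^sup>2" using hXp by (simp add: abs_le_square_iff[symmetric])
    moreover have "hX * hX / 16 = (hX/4)\<^sup>2" by (simp add: power2_eq_square)
    ultimately have "hX * hX / 16 \<le> q * hX" using main zero_le_power2[of "cmod (z1 - zX)"] by linarith
    hence "hX \<le> 16 * q" using hXp by (simp add: field_simps)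
    thus False using \<open>\<not> hX < 2\<close> qb e2 by linarith
  qed
  have "q * hX \<le> q * 2" using hX2 qp by (intro mult_left_mono) auto
  hence sum: "(cmod (z1 - zX))\<^sup>2 + (h1 - hX)\<^sup>2 \<le> 36 * \<epsilon>\<^sup>2"
    using main qb zero_le_power2[of \<epsilon>] by linarith
  have six: "(6 * \<epsilon>)\<^sup>2 = 36 * \<epsilon>\<^sup>2" by (simp add: power_mult_distrib)
  have sq: "(cmod (z1 - zX))\<^sup>2 \<le> (6 * \<epsilon>)\<^sup>2" "\<bar>h1 - hX\<bar>\<^sup>2 \<le> (6 * \<epsilon>)\<^sup>2"
    unfolding six power2_abs using sum zero_le_power2[of "cmod (z1 - zX)"] zero_le_power2[of "h1 - hX"]
    by linarith+
  have "cmod (z1 - zX) \<le> 6 * \<epsilon>" "\<bar>h1 - hX\<bar> \<le> 6 * \<epsilon>"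
    using power2_le_imp_le[OF sq(1)] power2_le_imp_le[OF sq(2)] e by simp_all
  moreover have "cmod zX \<le> cmod z1 + cmod (z1 - zX)"
    by (metis norm_triangle_sub norm_minus_commute add.commute)
  ultimately show ?thesis using a1 hXp by (simp add: near_def P)
qed

lemma near_segment:
  assumes e: "0 < \<epsilon>" "\<epsilon> \<le> 1/16" and n1: "near \<epsilon> P1" and n2: "near \<epsilon> P2"
  shows "hseg P1 P2 \<subseteq> {X. near (7 * \<epsilon>) X}"
proof
  fix X assume X: "X \<in> hseg P1 P2"
  have pos: "snd P1 > 0" "snd P2 > 0" "snd X > 0"
    using n1 n2 X by (simp_all add: near_def hseg_def H3_def)
  have "hquot P1 X \<le> 5 * \<epsilon>\<^sup>2"
    using hseg_hquot_le[OF X pos(1,2)] hquot_near_pair[OF e n1 n2] by linarith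
  thus "X \<in> {X. near (7 * \<epsilon>) X}" using near_of_hquot_small[OF e n1 pos(3)] by simp
qed

lemma hquot_A_less:
  assumes e: "0 < e" "e \<le> 1/2"
    and nX: "near (e/8) X" and nY: "near (e/8) Y" and fP: "far_from_A e P"
  shows "hquot X (0, 1) < hquot Y P"
proof -
  define \<eta> where "\<eta> = e/8"
  have \<eta>: "0 < \<eta>" "\<eta> \<le> 1/16" using e by (simp_all add: \<eta>_def)
  obtain zX hX zY hY zP hP where P: "X = (zX, hX)" "Y = (zY, hY)" "P = (zP, hP)" by fastforce
  have x: "cmod zX \<le> \<eta>" "\<bar>hX - 1\<bar> \<le> \<eta>" and y: "cmod zY \<le> \<eta>" "\<bar>hY - 1\<bar> \<le> \<eta>"
    using nX nY by (simp_all add: near_def P \<eta>_def)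
  have hp: "0 < hP" "hP \<le> 1" "hP \<le> 1/2 \<or> e \<le> cmod zP" using fP by (simp_all add: far_from_A_def P)
  have hX: "1/2 \<le> hX" and hY: "0 < hY" "hY \<le> 2" using x y \<eta> by auto
  have "(cmod zX)\<^sup>2 \<le> \<eta>\<^sup>2" "\<bar>hX - 1\<bar>\<^sup>2 \<le> \<eta>\<^sup>2"
    by (rule power_mono[OF x(1) norm_ge_zero], rule power_mono[OF x(2) abs_ge_zero])
  hence num_X: "(cmod zX)\<^sup>2 + (hX - 1)\<^sup>2 \<le> 2 * \<eta>\<^sup>2" by simp
  have "hquot X (0, 1) = ((cmod zX)\<^sup>2 + (hX - 1)\<^sup>2) / (2 * hX)"
    by (simp add: hquot_def P)
  also have "\<dots> \<le> ((cmod zX)\<^sup>2 + (hX - 1)\<^sup>2) / 1"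
    using hX by (intro divide_left_mono) auto
  finally have q1: "hquot X (0, 1) \<le> 2 * \<eta>\<^sup>2" using num_X by simp
  define num where "num = (cmod (zY - zP))\<^sup>2 + (hY - hP)\<^sup>2"
  have "hY * hP \<le> 2 * 1" using hY hp by (intro mult_mono) auto
  hence "num / 4 \<le> num / (2 * hY * hP)" using hY hp by (intro frac_le) (auto simp: num_def mult.commute)
  hence q2: "num / 4 \<le> hquot Y P" by (simp add: hquot_def P num_def)
  have "8 * \<eta>\<^sup>2 < num"
  proof (cases "hP \<le> 1/2")
    case True
    hence "7/16 \<le> hY - hP" using y(2) \<eta> by linarith
    hence "(7/16)\<^sup>2 \<le> (hY - hP)\<^sup>2" by (intro power_mono) auto
    moreover have "\<eta>\<^sup>2 \<le> (1/16)\<^sup>2" using \<eta> by (intro power_mono) auto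
    ultimately show ?thesis unfolding num_def
      by (simp add: power_divide) (use zero_le_power2[of "cmod (zY - zP)"] in linarith)
  next
    case False
    hence "e \<le> cmod zP" using hp by simp
    moreover have "cmod zP \<le> cmod (zY - zP) + cmod zY"
      by (metis norm_minus_commute norm_triangle_sub add.commute)
    ultimately have "7 * \<eta> \<le> cmod (zY - zP)" using y(1) by (simp add: \<eta>_def)
    hence "(7 * \<eta>)\<^sup>2 \<le> (cmod (zY - zP))\<^sup>2" using \<eta> by (intro power_mono) auto
    moreover have "(7 * \<eta>)\<^sup>2 = 49 * \<eta>\<^sup>2" by (simp add: power_mult_distrib)
    ultimately show ?thesis unfolding num_def using \<eta>(1) zero_le_power2[of "hY - hP"]
      by (smt (verit) zero_less_power)
  qed
  thus ?thesis using q1 q2 by linarith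
qed

lemma near_set_in_Rregion_embeds:
  assumes grp: "psl2_group \<Gamma>" and e: "0 < e" "e \<le> 1/2"
    and sepA: "\<And>\<gamma>. \<gamma> \<in> \<Gamma> \<Longrightarrow> \<gamma> = mat 1 \<or> \<gamma> = - mat 1 \<or> far_from_A e (mob \<gamma> (0, 1))"
    and S: "S \<subseteq> {X. near (e/8) X}"
  shows "S \<subseteq> Rregion \<Gamma> (0, 1)" and "embeds_mod \<Gamma> S"
proof -
  have det: "det \<gamma> = 1" if "\<gamma> \<in> \<Gamma>" for \<gamma> using grp that by (simp add: psl2_group_def)
  have pos: "snd X > 0" if "X \<in> S" for X using S that by (auto simp: near_def)
  show "S \<subseteq> Rregion \<Gamma> (0, 1)"
  proof
    fix X assume X: "X \<in> S"
    have "hdist X (0, 1) < hdist X (mob \<gamma> (0, 1))" if \<gamma>: "\<gamma> \<in> \<Gamma>" "mob \<gamma> (0, 1) \<noteq> (0, 1)" for \<gamma>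
    proof -
      have "far_from_A e (mob \<gamma> (0, 1))" using sepA[OF \<gamma>(1)] \<gamma>(2) mob_pm_one[of "(0, 1)"] by auto
      hence "hquot X (0, 1) < hquot X (mob \<gamma> (0, 1))" using hquot_A_less e S X by blast
      thus ?thesis using hdist_less_iff pos[OF X] mob_pos[OF det[OF \<gamma>(1)]] by simp
    qed
    thus "X \<in> Rregion \<Gamma> (0, 1)" using pos[OF X] by (simp add: Rregion_def H3_def)
  qed
  show "embeds_mod \<Gamma> S" unfolding embeds_mod_def
  proof (intro ballI impI)
    fix x y assume x: "x \<in> S" and y: "y \<in> S" and "\<exists>\<gamma>\<in>\<Gamma>. mob \<gamma> x = y"
    then obtain \<gamma> where \<gamma>: "\<gamma> \<in> \<Gamma>" "mob \<gamma> x = y" by blast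
    show "x = y"
    proof (rule ccontr)
      assume "x \<noteq> y"
      hence "far_from_A e (mob \<gamma> (0, 1))" using sepA[OF \<gamma>(1)] \<gamma>(2) mob_pm_one[of x] by auto
      hence "hquot x (0, 1) < hquot y (mob \<gamma> (0, 1))" using hquot_A_less e S x y by blast
      moreover have "hquot y (mob \<gamma> (0, 1)) = hquot x (0, 1)"
        using hquot_mob[OF det[OF \<gamma>(1)] pos[OF x], of "(0, 1)"] \<gamma>(2) by simp
      ultimately show False by simp
    qed
  qed
qed

section \<open>Geometry of the axis of a large loxodromic element\<close>

lemma quadratic_roots_split:
  fixes b k :: complex
  assumes k1: "cmod k = 1" and b3: "3 \<le> cmod b"
  shows "\<exists>zm zp. zm + zp = b \<and> zm * zp = k \<and> cmod zm < 1 \<and> cmod b - 1 \<le> cmod zp \<and> cmod zm * cmod zp = 1"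
proof -
  have ordered: "\<exists>zm zp. zm + zp = b \<and> zm * zp = k \<and> cmod zm < 1 \<and> cmod b - 1 \<le> cmod zp \<and> cmod zm * cmod zp = 1"
    if s: "x + y = b" and p: "x * y = k" and le: "cmod x \<le> cmod y" for x y
  proof -
    have pm: "cmod x * cmod y = 1" using p k1 by (metis norm_mult)
    have x1: "cmod x \<le> 1"
    proof (rule ccontr)
      assume "\<not> cmod x \<le> 1"
      hence "1 * 1 < cmod x * cmod y" using le by (intro mult_strict_mono) auto
      thus False using pm by simp
    qed
    have "cmod b \<le> cmod x + cmod y" using s norm_triangle_ineq by blast
    hence yb: "cmod b - 1 \<le> cmod y" using x1 by simp
    hence "cmod x \<noteq> 1" using pm b3 by auto
    thus ?thesis using s p yb pm x1 by fastforce
  qed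
  define w where "w = csqrt (b\<^sup>2 - 4 * k)"
  define r1 r2 where "r1 = (b + w) / 2" and "r2 = (b - w) / 2"
  have s: "r1 + r2 = b" by (simp add: r1_def r2_def field_simps)
  have "r1 * r2 = (b\<^sup>2 - w\<^sup>2) / 4" by (simp add: r1_def r2_def power2_eq_square field_simps)
  hence p: "r1 * r2 = k" by (simp add: w_def)
  show ?thesis
    using ordered[OF s p] ordered[of r2 r1] s p by (cases "cmod r1 \<le> cmod r2") (auto simp: add.commute mult.commute)
qed

lemma bfix_axis_matrix:
  fixes b c z :: complex
  assumes c0: "c \<noteq> 0" and s: "zm + zp = b" and p: "zm * zp = 1 / c\<^sup>2"
  shows "bfix (mat2 (c*b) (-1/c) c 0) z \<longleftrightarrow> z = zm \<or> z = zp"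
proof -
  have "bfix (mat2 (c*b) (-1/c) c 0) z \<longleftrightarrow> c * z\<^sup>2 + (0 - c*b) * z - (-1/c) = 0"
    by (simp add: bfix_def)
  also have "c * z\<^sup>2 + (0 - c*b) * z - (-1/c) = c * ((z - zm) * (z - zp))"
    using c0 unfolding s[symmetric] by (simp add: p power2_eq_square algebra_simps)
  finally show ?thesis using c0 by simp
qed

lemma axis_fixed_points:
  fixes b c :: complex
  assumes c1: "cmod c = 1" and b3: "3 \<le> cmod b"
  defines "G \<equiv> mat2 (c*b) (-1/c) c 0"
  shows "\<exists>zm zp. zm \<noteq> zp \<and> {z. bfix G z} = {zm, zp} \<and> rep_fix G zm \<and> att_fix G zp \<and>
           zm + zp = b \<and> cmod zm * (cmod b - 1) \<le> 1 \<and> cmod b - 2 \<le> cmod (zp - zm)"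
proof -
  have c0: "c \<noteq> 0" using c1 by auto
  have "cmod (1/c\<^sup>2) = 1" using c1 by (simp add: norm_divide norm_power)
  then obtain zm zp where r: "zm + zp = b" "zm * zp = 1/c\<^sup>2" "cmod zm < 1" "cmod b - 1 \<le> cmod zp"
      "cmod zm * cmod zp = 1"
    using quadratic_roots_split b3 by blast
  have zp1: "1 < cmod zp" using r(4) b3 by simp
  have fx: "{z. bfix G z} = {zm, zp}" using bfix_axis_matrix[OF c0 r(1,2)] by (auto simp: G_def)
  have "cmod zm * (cmod b - 1) \<le> cmod zm * cmod zp" using r(4) by (simp add: mult_left_mono)
  moreover have "cmod zp - cmod zm \<le> cmod (zp - zm)" by (rule norm_triangle_ineq2)
  moreover have "rep_fix G zm" "att_fix G zp"
    using fx r(3) zp1 by (auto simp: rep_fix_def att_fix_def G_def norm_mult c1)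
  ultimately show ?thesis using fx r zp1 by (intro exI[of _ zm] exI[of _ zp]) auto
qed

lemma segment_param: "(1 - u) *\<^sub>R (a::complex) + u *\<^sub>R b = a + of_real u * (b - a)"
  by (simp add: scaleR_conv_of_real algebra_simps)

lemma axis_height_one_params:
  fixes zm zp :: complex and u :: real
  assumes R1: "1 < R" and R: "R = cmod (zp - zm) / 2" and s: "s = sqrt (R\<^sup>2 - 1)"
  shows "(cmod (zm + of_real u * (zp - zm) - (zm + zp)/2))\<^sup>2 + 1 = (cmod (zm - zp))\<^sup>2 / 4
      \<longleftrightarrow> u = 1/2 - s / (2*R) \<or> u = 1/2 + s / (2*R)"
proof -
  have s2: "s\<^sup>2 = R\<^sup>2 - 1" unfolding s using R1 by (simp add: power_le_one_iff)
  have eq: "zm + of_real u * (zp - zm) - (zm + zp)/2 = of_real (u - 1/2) * (zp - zm)"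
    by (simp add: field_simps)
  have l: "(cmod (zm + of_real u * (zp - zm) - (zm + zp)/2))\<^sup>2 = (u - 1/2)\<^sup>2 * (4 * R\<^sup>2)"
    unfolding eq norm_mult norm_of_real power_mult_distrib R by (simp add: power_divide)
  have r: "(cmod (zm - zp))\<^sup>2 / 4 = R\<^sup>2" by (simp add: R norm_minus_commute power_divide)
  have "(u - 1/2)\<^sup>2 * (4 * R\<^sup>2) + 1 = R\<^sup>2 \<longleftrightarrow> (u - 1/2)\<^sup>2 = (s/(2*R))\<^sup>2"
    using R1 s2 by (simp add: power_divide field_simps) (smt (verit))
  also have "\<dots> \<longleftrightarrow> u - 1/2 = s/(2*R) \<or> u - 1/2 = - (s/(2*R))"
    by (simp add: power2_eq_iff)
  also have "\<dots> \<longleftrightarrow> u = 1/2 - s / (2*R) \<or> u = 1/2 + s / (2*R)" by auto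
  finally show ?thesis unfolding l r .
qed

lemma axis_Hinf_points:
  fixes zm zp :: complex
  assumes R1: "1 < R" and R: "R = cmod (zp - zm) / 2" and s: "s = sqrt (R\<^sup>2 - 1)"
    and t: "0 < 1/2 - s / (2*R)" "1/2 - s / (2*R) < 1/2 + s / (2*R)" "1/2 + s / (2*R) < 1"
  shows "hline zm zp \<inter> Hinf =
     {(zm + of_real (1/2 - s / (2*R)) * (zp - zm), 1), (zm + of_real (1/2 + s / (2*R)) * (zp - zm), 1)}"
    (is "_ = {(?C, 1), (?D, 1)}")
proof -
  note params = axis_height_one_params[OF R1 R s]
  show ?thesis
  proof (intro equalityI subsetI)
    fix x assume x: "x \<in> hline zm zp \<inter> Hinf"
    then obtain u where u: "fst x = zm + of_real u * (zp - zm)" "snd x = 1"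
      by (auto simp: hline_def in_segment segment_param Hinf_def)
    hence "u = 1/2 - s / (2*R) \<or> u = 1/2 + s / (2*R)" using x params by (simp add: hline_def)
    thus "x \<in> {(?C, 1), (?D, 1)}" using u by (cases x) auto
  next
    fix x :: hpt assume "x \<in> {(?C, 1), (?D, 1)}"
    then obtain u where u: "u = 1/2 - s / (2*R) \<or> u = 1/2 + s / (2*R)"
        "x = (zm + of_real u * (zp - zm), 1)"
      by blast
    have "zm \<noteq> zp" using R1 R by auto
    hence "zm + of_real u * (zp - zm) \<in> open_segment zm zp"
      using u(1) t by (auto simp: in_segment segment_param intro!: exI[of _ u])
    thus "x \<in> hline zm zp \<inter> Hinf" using params u by (simp add: hline_def Hinf_def)
  qed
qed

lemma axis_meets_Hinf:
  fixes zm zp :: complex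
  assumes R1: "1 < cmod (zp - zm) / 2"
  shows "\<exists>zC zD. hline zm zp \<inter> Hinf = {(zC, 1), (zD, 1)} \<and> zC \<noteq> zD \<and>
           cmod (zC - zm) < cmod (zD - zm) \<and> zC + zD = zm + zp \<and>
           cmod zC \<le> cmod zm + 2 / cmod (zp - zm)"
proof -
  define R where "R = cmod (zp - zm) / 2"
  define s where "s = sqrt (R\<^sup>2 - 1)"
  define tC tD where "tC = 1/2 - s / (2*R)" and "tD = 1/2 + s / (2*R)"
  define zC zD where "zC = zm + of_real tC * (zp - zm)" and "zD = zm + of_real tD * (zp - zm)"
  have R: "R > 1" using R1 by (simp add: R_def)
  have s2: "s\<^sup>2 = R\<^sup>2 - 1" unfolding s_def using R by (simp add: power_le_one_iff)
  have spos: "s > 0" unfolding s_def using R by (simp add: one_less_power)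
  have "s\<^sup>2 < R\<^sup>2" using s2 by simp
  hence "s < R" using R by (smt (verit) power_mono)
  hence q: "0 < s / (2*R)" "s / (2*R) < 1/2" using spos R by (simp_all add: field_simps)
  hence t01: "0 < tC" "tC < tD" "tD < 1" by (simp_all add: tC_def tD_def)
  have nz: "cmod (zp - zm) = 2 * R" by (simp add: R_def)
  have dist_t: "cmod (of_real t * (zp - zm)) = \<bar>t\<bar> * (2*R)" for t by (simp add: norm_mult nz)
  have "hline zm zp \<inter> Hinf = {(zC, 1), (zD, 1)}"
    using axis_Hinf_points[OF R R_def s_def] t01 unfolding zC_def zD_def tC_def tD_def by blast
  moreover have "cmod (zC - zm) < cmod (zD - zm)" using t01 R by (simp add: zC_def zD_def dist_t)
  moreover have "zC + zD = zm + zp"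
  proof -
    have "tC + tD = 1" by (simp add: tC_def tD_def)
    hence "of_real tC + of_real tD = (1::complex)" by (metis of_real_1 of_real_add)
    thus ?thesis unfolding zC_def zD_def
      by (simp add: algebra_simps) (metis add.commute add_diff_cancel_left' distrib_left mult.right_neutral)
  qed
  moreover have "cmod zC \<le> cmod zm + 2 / cmod (zp - zm)"
  proof -
    have "cmod zC \<le> cmod zm + cmod (of_real tC * (zp - zm))" unfolding zC_def by (rule norm_triangle_ineq)
    also have "cmod (of_real tC * (zp - zm)) = tC * (2*R)" using t01 by (simp add: dist_t)
    also have "tC * (2*R) = R - s" using R by (simp add: tC_def field_simps)
    also have "R - s = 1 / (R + s)"
    proof -
      have "(R - s) * (R + s) = 1" using s2 by (simp add: power2_eq_square algebra_simps)
      thus ?thesis using R spos by (simp add: field_simps)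
    qed
    also have "1 / (R + s) \<le> 1 / R" using R spos by (simp add: frac_le)
    finally show ?thesis by (simp add: R_def)
  qed
  ultimately show ?thesis by (intro exI[of _ zC] exI[of _ zD]) auto
qed

lemma mob_axis_inverse_near:
  fixes c b z w :: complex
  assumes c1: "cmod c = 1" and bz: "b - z = w" and w: "cmod w \<le> \<epsilon>" "\<epsilon> \<le> 1"
  shows "near \<epsilon> (mob (mat2 0 (1/c) (-c) (c*b)) (z, 1))"
proof -
  define P where "P = mob (mat2 0 (1/c) (-c) (c*b)) (z, 1)"
  define n where "n = (cmod w)\<^sup>2 + 1"
  have n: "1 \<le> n" by (simp add: n_def)
  have e: "- c * z + c * b = c * w" "c * b - c * z = c * w" using bz by (simp_all add: algebra_simps)
  have e': "cnj c * cnj b - cnj c * cnj z = cnj c * cnj w" using arg_cong[OF e(2), of cnj] by simp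
  have sP: "snd P = 1 / n" by (simp add: P_def n_def mob_snd e norm_mult c1)
  have "fst P = (1/c) * cnj (c * w) / of_real n"
    by (simp add: P_def n_def mob_def Let_def e e' norm_mult c1)
  hence fP: "cmod (fst P) = cmod w / n"
    using n by (simp add: norm_divide norm_mult c1)
  have "cmod w / n \<le> cmod w" using n by (simp add: divide_le_eq mult_le_cancel_left1)
  moreover have "\<bar>1 / n - 1\<bar> \<le> \<epsilon>"
  proof -
    have "1 / n - 1 = - ((n - 1) / n)" using n by (simp add: field_simps)
    hence "1 / n - 1 = - ((cmod w)\<^sup>2 / n)" by (simp add: n_def)
    hence "\<bar>1 / n - 1\<bar> = (cmod w)\<^sup>2 / n" using n by simp
    also have "\<dots> \<le> (cmod w)\<^sup>2" using n by (simp add: divide_le_eq mult_le_cancel_left1)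
    also have "\<dots> \<le> cmod w" using w by (simp add: power2_eq_square mult_le_one mult_left_le)
    finally show ?thesis using w by linarith
  qed
  ultimately show ?thesis using n sP fP w by (simp add: near_def P_def)
qed

section \<open>The short arcs\<close>

text \<open>Indeed \<open>C\<close> lies within \<open>\<epsilon>\<close> of \<open>A\<close>, and \<open>G\<^sup>-\<^sup>1\<close> maps \<open>D\<close> (the mirror image of \<open>C\<close>
  on the axis) within \<open>\<epsilon>\<close> of \<open>A\<close> as well.\<close>
lemma short_arc_near_A:
  fixes b c :: complex and \<epsilon> :: real
  assumes c1: "cmod c = 1" and e: "0 < \<epsilon>" "\<epsilon> \<le> 1/16" and bb: "4 + 4/\<epsilon> \<le> cmod b"
  defines "G \<equiv> mat2 (c*b) (-1/c) c 0"
  shows "\<exists>zm zp. zm \<noteq> zp \<and> {z. bfix G z} = {zm, zp} \<and> rep_fix G zm \<and> att_fix G zp \<and>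
      (\<exists>C D. hline zm zp \<inter> Hinf = {C, D} \<and> C \<noteq> D \<and> cmod (fst C - zm) < cmod (fst D - zm) \<and>
         hseg (mob (matrix_inv G) D) C \<subseteq> {X. near (7 * \<epsilon>) X})"
proof -
  have c0: "c \<noteq> 0" using c1 by auto
  have e4: "4 \<le> 4/\<epsilon>" using e by (simp add: field_simps)
  obtain zm zp where Z: "zm \<noteq> zp" "{z. bfix G z} = {zm, zp}" "rep_fix G zm" "att_fix G zp"
      and sum: "zm + zp = b" and zm: "cmod zm * (cmod b - 1) \<le> 1" and r: "cmod b - 2 \<le> cmod (zp - zm)"
    using axis_fixed_points[OF c1, of b] bb e4 unfolding G_def by auto
  have r4: "4/\<epsilon> < cmod (zp - zm)" using r bb by linarith
  hence R1: "1 < cmod (zp - zm) / 2" using e4 by linarith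
  have "4 < \<epsilon> * cmod (zp - zm)" using r4 e by (simp add: divide_less_eq mult.commute)
  hence iR: "2 / cmod (zp - zm) \<le> \<epsilon>/2" using R1 e by (simp add: divide_le_eq)
  have "cmod zm * (4/\<epsilon>) \<le> 1" using zm bb by (smt (verit) mult_left_mono norm_ge_zero)
  hence zm4: "cmod zm \<le> \<epsilon>/4" using e by (simp add: field_simps)
  obtain zC zD where H: "hline zm zp \<inter> Hinf = {(zC, 1), (zD, 1)}" "zC \<noteq> zD"
      "cmod (zC - zm) < cmod (zD - zm)" "zC + zD = zm + zp" "cmod zC \<le> cmod zm + 2 / cmod (zp - zm)"
    using axis_meets_Hinf[OF R1] by blast
  have zC: "cmod zC \<le> \<epsilon>" using H(5) iR zm4 e by linarith
  have nC: "near \<epsilon> (zC, 1)" using zC e by (simp add: near_def)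
  have "matrix_inv G = mat2 0 (1/c) (-c) (c*b)" using matrix_inv_mat2[of "c*b" 0 "-1/c" c] c0
    by (simp add: G_def)
  moreover have "b - zD = zC" using H(4) sum by (simp add: algebra_simps)
  ultimately have nD: "near \<epsilon> (mob (matrix_inv G) (zD, 1))"
    using mob_axis_inverse_near[OF c1 _ zC] e by simp
  show ?thesis using Z H(1-3) near_segment[OF e nD nC] by (intro exI[of _ zm] exI[of _ zp]) auto
qed

lemma short_arc_R_close:
  assumes grp: "psl2_group \<Gamma>" and e: "0 < e" "e \<le> 1/2"
    and sepA: "\<And>\<gamma>. \<gamma> \<in> \<Gamma> \<Longrightarrow> \<gamma> = mat 1 \<or> \<gamma> = - mat 1 \<or> far_from_A e (mob \<gamma> (0, 1))"
    and c1: "cmod c = 1" and bb: "4 + 224/e \<le> cmod b"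
  defines "G \<equiv> mat2 (c*b) (-1/c) c 0"
  shows "\<exists>zm zp. zm \<noteq> zp \<and> {z. bfix G z} = {zm, zp} \<and> rep_fix G zm \<and> att_fix G zp \<and>
      (\<exists>C D. hline zm zp \<inter> Hinf = {C, D} \<and> C \<noteq> D \<and> cmod (fst C - zm) < cmod (fst D - zm) \<and>
         hseg (mob (matrix_inv G) D) C \<subseteq> Rregion \<Gamma> (0, 1) \<and>
         embeds_mod \<Gamma> (hseg (mob (matrix_inv G) D) C))"
proof -
  have \<epsilon>: "0 < e/56" "e/56 \<le> 1/16" "4 + 4/(e/56) \<le> cmod b" "7 * (e/56) = e/8"
    using e bb by simp_all
  show ?thesis using short_arc_near_A[OF c1 \<epsilon>(1-3)] near_set_in_Rregion_embeds[OF grp e sepA]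
    unfolding \<epsilon>(4) G_def by metis
qed

theorem lemma4p2:
  fixes \<Gamma> :: "cmat set" and t\<alpha> t\<beta> c b00 :: complex and x0 y0 :: real and g :: cmat
  assumes grp: "psl2_group \<Gamma>"
    and disc: "discrete \<Gamma>"
    and tf: "torsion_free \<Gamma>"
    and finvol: "finite_covolume \<Gamma>"
    and indep: "\<forall>r s :: real. complex_of_real r * t\<alpha> + complex_of_real s * t\<beta> = 0 \<longrightarrow> r = 0 \<and> s = 0"
    and stab: "\<forall>\<gamma>\<in>\<Gamma>. \<gamma>$2$1 = 0 \<longleftrightarrow>
                 (\<exists>p q :: int. \<gamma> = transl (of_int p * t\<alpha> + of_int q * t\<beta>)
                             \<or> \<gamma> = - transl (of_int p * t\<alpha> + of_int q * t\<beta>))"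
    and horoball: "\<forall>\<gamma>\<in>\<Gamma>. mob \<gamma> ` Binf = Binf \<or> mob \<gamma> ` Binf \<inter> Binf = {}"
    and b00: "b00 = complex_of_real x0 * t\<alpha> + complex_of_real y0 * t\<beta>"
    and x0: "0 \<le> x0" "x0 < 1" and y0: "0 \<le> y0" "y0 < 1" and nz: "\<not> (x0 = 0 \<and> y0 = 0)"
    and g_def: "g = mat2 (c * b00) (- 1 / c) c 0"
    and g_in: "g \<in> \<Gamma>"
    and gH0: "mob g ` H0 = Hinf"
    and gA: "mob g (0, 1) = (b00, 1)"
  shows "\<exists>N0::real. \<forall>p q :: int. sqrt (real_of_int (p\<^sup>2 + q\<^sup>2)) > N0 \<longrightarrow>
           (let G = transl (of_int p * t\<alpha> + of_int q * t\<beta>) ** g in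
            \<exists>zm zp. zm \<noteq> zp \<and> {z. bfix G z} = {zm, zp} \<and> rep_fix G zm \<and> att_fix G zp \<and>
              (\<exists>C D. hline zm zp \<inter> Hinf = {C, D} \<and> C \<noteq> D \<and>
                 cmod (fst C - zm) < cmod (fst D - zm) \<and>
                 hseg (mob (matrix_inv G) D) C \<subseteq> Rregion \<Gamma> (0, 1) \<and>
                 embeds_mod \<Gamma> (hseg (mob (matrix_inv G) D) C)))"
proof -
  have "1 / (cmod c)\<^sup>2 = 1" using arg_cong[OF gA, of snd] by (simp add: g_def mob_at_A)
  hence c1: "cmod c = 1" using norm_ge_zero[of c] by (auto simp: power2_eq_1_iff)
  obtain e where e: "0 < e" "e \<le> 1/2"
    and lat: "\<forall>p q :: int. (p, q) \<noteq> (0, 0) \<longrightarrow> e \<le> cmod (of_int p * t\<alpha> + of_int q * t\<beta>)"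
    using lattice_minimum[OF indep] by blast
  note sepA = orbit_separation[OF grp tf stab horoball g_in[unfolded g_def] c1 lat e(2)]
  obtain N0 where N0: "\<forall>p q :: int. N0 < sqrt (real_of_int (p\<^sup>2 + q\<^sup>2)) \<longrightarrow>
      4 + 224/e \<le> cmod (b00 + (of_int p * t\<alpha> + of_int q * t\<beta>))"
    using lattice_translate_large[OF indep] by blast
  have G: "transl t ** g = mat2 (c * (b00 + t)) (- 1 / c) c 0" for t
    by (simp add: g_def transl_mult algebra_simps)
  show ?thesis unfolding Let_def G using N0 short_arc_R_close[OF grp e sepA c1] by blast
qed

end
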